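(* Let $D,d_1,d_2\in\mathbb{Z}$ and let $T=(T_{r,k})_{r,k\ge 0}$ be a number triangle with $T_{r,0}=T_{0,0}+rd_2$ and $T_{0,k}=T_{0,0}+kd_1$ for all $r,k\ge 0$, with $T_{r,k}\neq 0$ for all $r,k\ge 0$, and with $$T_{r,k}=\frac{T_{r,k-1}\cdot T_{r-1,k}+D}{T_{r-1,k-1}}\quad\text{for all } r,k\ge 1.$$ Then there exist $c,d\in\mathbb{Z}$ such that $T=T(c,d,d_1,d_2)$ (i.e. $T_{r,k}=c+kd_1+rd_2+rkd$ for all $r,k\ge 0$) and $D=cd-d_1d_2$.
   Context: A number triangle is an array of integers $T_{r,k}$ indexed by integers $r,k\ge 0$ ($T_{r,k}$ being the $k$-th entry on the $r$-th major diagonal, row $n$ consisting of the entries with $r+k=n$). For $c,d,d_1,d_2\in\mathbb{Z}$, the Generalized Rascal Triangle $T(c,d,d_1,d_2)$ is the number triangle with $T_{r,k}=c+kd_1+rd_2+rkd$. *)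

theory Defs
  imports Main "HOL.Real"
begin

definition rascal :: "int \<Rightarrow> int \<Rightarrow> int \<Rightarrow> int \<Rightarrow> nat \<Rightarrow> nat \<Rightarrow> int" where
  "rascal c d d1 d2 r k = c + int k * d1 + int r * d2 + int r * int k * d"

end

theory Submission
  imports Defs
begin

text \<open>The rascal triangle \<open>T(c,d,d\<^sub>1,d\<^sub>2)\<close> satisfies the cleared-denominator recurrence
  \<open>T(r+1,k+1) T(r,k) = T(r+1,k) T(r,k+1) + D\<close> with \<open>D = cd - d\<^sub>1d\<^sub>2\<close>. As all entries are
  nonzero, this recurrence determines a triangle from its two borders. Taking \<open>c = T(0,0)\<close> and
  choosing \<open>d\<close> so that the rascal triangle matches \<open>T(1,1)\<close> makes the borders and \<open>D\<close> agree,
  so the two triangles coincide.\<close>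

lemma rascal_diamond:
  "rascal c d d1 d2 (Suc r) (Suc k) * rascal c d d1 d2 r k =
   rascal c d d1 d2 (Suc r) k * rascal c d d1 d2 r (Suc k) + (c * d - d1 * d2)"
  unfolding rascal_def by (simp add: algebra_simps)

lemma diamond_recurrence_unique:
  fixes S T :: "nat \<Rightarrow> nat \<Rightarrow> 'a::idom"
  assumes left: "\<And>r. S r 0 = T r 0"
    and top: "\<And>k. S 0 k = T 0 k"
    and nonzero: "\<And>r k. T r k \<noteq> 0"
    and S_rec: "\<And>r k. S (Suc r) (Suc k) * S r k = S (Suc r) k * S r (Suc k) + D"
    and T_rec: "\<And>r k. T (Suc r) (Suc k) * T r k = T (Suc r) k * T r (Suc k) + D"
  shows "S r k = T r k"
proof (induction r arbitrary: k)
  case 0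
  show ?case by (rule top)
next
  case (Suc r)
  show ?case
  proof (induction k)
    case 0
    show ?case by (rule left)
  next
    case (Suc k)
    have "S (Suc r) (Suc k) * T r k = T (Suc r) (Suc k) * T r k"
      using S_rec[of r k] T_rec[of r k] Suc.IH \<open>\<And>k. S r k = T r k\<close> by simp
    then show ?case using nonzero[of r k] by simp
  qed
qed

lemma of_int_div_eq_imp_mult_eq:
  fixes x y z w D :: int
  assumes "w \<noteq> 0"
    and "real_of_int x = (real_of_int y * real_of_int z + real_of_int D) / real_of_int w"
  shows "x * w = y * z + D"
proof -
  have "real_of_int (x * w) = real_of_int (y * z + D)"
    using assms by (simp add: field_simps)
  then show ?thesis by (rule of_int_eq_iff[THEN iffD1])
qed

theorem mainTheorem4:
  fixes T :: "nat \<Rightarrow> nat \<Rightarrow> int" and D d1 d2 :: int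
  assumes "\<And>r. T r 0 = T 0 0 + int r * d2"
    and "\<And>k. T 0 k = T 0 0 + int k * d1"
    and "\<And>r k. T r k \<noteq> 0"
    and "\<And>r k. r \<ge> 1 \<Longrightarrow> k \<ge> 1 \<Longrightarrow>
           real_of_int (T r k) =
             (real_of_int (T r (k - 1)) * real_of_int (T (r - 1) k) + real_of_int D)
               / real_of_int (T (r - 1) (k - 1))"
  shows "\<exists>c d :: int. (\<forall>r k. T r k = rascal c d d1 d2 r k) \<and> D = c * d - d1 * d2"
proof -
  have T_rec: "T (Suc r) (Suc k) * T r k = T (Suc r) k * T r (Suc k) + D" for r k
    using of_int_div_eq_imp_mult_eq[OF assms(3) assms(4)[of "Suc r" "Suc k"]]
    by (simp add: mult.commute)
  define c where "c = T 0 0"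
  define d where "d = T 1 1 - c - d1 - d2"
  have D_eq: "D = c * d - d1 * d2"
    using T_rec[of 0 0] assms(1)[of 1] assms(2)[of 1]
    unfolding c_def d_def by (simp add: algebra_simps)
  have "rascal c d d1 d2 r k = T r k" for r k
  proof (rule diamond_recurrence_unique)
    show "rascal c d d1 d2 r 0 = T r 0" for r
      using assms(1)[of r] unfolding rascal_def c_def by simp
    show "rascal c d d1 d2 0 k = T 0 k" for k
      using assms(2)[of k] unfolding rascal_def c_def by simp
  qed (use assms(3) T_rec rascal_diamond D_eq in simp_all)
  with D_eq show ?thesis by metis
qed

end
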